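(* Let $K$ be a lattice of finite length. (i) If $e$ is a nonzero join-prime element of $K$, $f\in K$, and $e\le f$, then the subposet $L:=K\setminus[e,f]$ of $K$ is a lattice. (ii) Let $t$ be a positive integer and let $K_1,\dots,K_t$ be upper semimodular lattices of finite length. Let $K=K_1\times\dots\times K_t$, and let $e=(e_1,\dots,e_t)\in K$ be a nonzero join-prime element. Such an $e$ has exactly one index $i\in\{1,\dots,t\}$ with $e_i\neq 0_i$, where $0_j$ is the bottom of $K_j$. Let $f=(f_1,\dots,f_t)\in K$ be such that $f_i=1_i$, the top element of $K_i$. Then the subposet $L:=K\setminus[e,f]$ of $K$ is an upper semimodular lattice, and it is a join-subsemilattice of $K$.
   Context: An element $u$ of a lattice is join-prime if $u\le x\vee y$ implies $u\le x$ or $u\le y$. $[e,f]=\{x: e\le x\le f\}$ denotes an interval. A lattice is upper semimodular if for all $x,y$, $x\wedge y\prec x$ implies $y\prec x\vee y$, where $\prec$ is the covering relation. *)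

theory Defs
  imports Main "HOL-Library.FuncSet"
begin

text \<open>Posets are given relationally: a carrier set A together with an order relation le.
  Subposets carry the restricted order (same relation, smaller carrier).\<close>

definition poset_on :: "'a set \<Rightarrow> ('a \<Rightarrow> 'a \<Rightarrow> bool) \<Rightarrow> bool" where
  "poset_on A le \<longleftrightarrow>
     (\<forall>x\<in>A. le x x) \<and>
     (\<forall>x\<in>A. \<forall>y\<in>A. le x y \<and> le y x \<longrightarrow> x = y) \<and>
     (\<forall>x\<in>A. \<forall>y\<in>A. \<forall>z\<in>A. le x y \<and> le y z \<longrightarrow> le x z)"

definition is_lub :: "'a set \<Rightarrow> ('a \<Rightarrow> 'a \<Rightarrow> bool) \<Rightarrow> 'a \<Rightarrow> 'a \<Rightarrow> 'a \<Rightarrow> bool" where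
  "is_lub A le x y z \<longleftrightarrow> z \<in> A \<and> le x z \<and> le y z \<and>
     (\<forall>w\<in>A. le x w \<and> le y w \<longrightarrow> le z w)"

definition is_glb :: "'a set \<Rightarrow> ('a \<Rightarrow> 'a \<Rightarrow> bool) \<Rightarrow> 'a \<Rightarrow> 'a \<Rightarrow> 'a \<Rightarrow> bool" where
  "is_glb A le x y z \<longleftrightarrow> z \<in> A \<and> le z x \<and> le z y \<and>
     (\<forall>w\<in>A. le w x \<and> le w y \<longrightarrow> le w z)"

definition lattice_on :: "'a set \<Rightarrow> ('a \<Rightarrow> 'a \<Rightarrow> bool) \<Rightarrow> bool" where
  "lattice_on A le \<longleftrightarrow> poset_on A le \<and>
     (\<forall>x\<in>A. \<forall>y\<in>A. (\<exists>z. is_lub A le x y z) \<and> (\<exists>z. is_glb A le x y z))"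

definition ljoin :: "'a set \<Rightarrow> ('a \<Rightarrow> 'a \<Rightarrow> bool) \<Rightarrow> 'a \<Rightarrow> 'a \<Rightarrow> 'a" where
  "ljoin A le x y = (THE z. is_lub A le x y z)"

definition lmeet :: "'a set \<Rightarrow> ('a \<Rightarrow> 'a \<Rightarrow> bool) \<Rightarrow> 'a \<Rightarrow> 'a \<Rightarrow> 'a" where
  "lmeet A le x y = (THE z. is_glb A le x y z)"

definition lbot :: "'a set \<Rightarrow> ('a \<Rightarrow> 'a \<Rightarrow> bool) \<Rightarrow> 'a" where
  "lbot A le = (THE b. b \<in> A \<and> (\<forall>x\<in>A. le b x))"

definition ltop :: "'a set \<Rightarrow> ('a \<Rightarrow> 'a \<Rightarrow> bool) \<Rightarrow> 'a" where
  "ltop A le = (THE b. b \<in> A \<and> (\<forall>x\<in>A. le x b))"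

definition is_chain_in :: "'a set \<Rightarrow> ('a \<Rightarrow> 'a \<Rightarrow> bool) \<Rightarrow> 'a set \<Rightarrow> bool" where
  "is_chain_in A le C \<longleftrightarrow> C \<subseteq> A \<and> (\<forall>x\<in>C. \<forall>y\<in>C. le x y \<or> le y x)"

definition finite_length :: "'a set \<Rightarrow> ('a \<Rightarrow> 'a \<Rightarrow> bool) \<Rightarrow> bool" where
  "finite_length A le \<longleftrightarrow> (\<exists>n::nat. \<forall>C. is_chain_in A le C \<longrightarrow> finite C \<and> card C \<le> n)"

definition join_prime :: "'a set \<Rightarrow> ('a \<Rightarrow> 'a \<Rightarrow> bool) \<Rightarrow> 'a \<Rightarrow> bool" where
  "join_prime A le u \<longleftrightarrow> u \<in> A \<and>
     (\<forall>x\<in>A. \<forall>y\<in>A. le u (ljoin A le x y) \<longrightarrow> le u x \<or> le u y)"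

definition interval :: "'a set \<Rightarrow> ('a \<Rightarrow> 'a \<Rightarrow> bool) \<Rightarrow> 'a \<Rightarrow> 'a \<Rightarrow> 'a set" where
  "interval A le e f = {x \<in> A. le e x \<and> le x f}"

definition covers :: "'a set \<Rightarrow> ('a \<Rightarrow> 'a \<Rightarrow> bool) \<Rightarrow> 'a \<Rightarrow> 'a \<Rightarrow> bool" where
  "covers A le x y \<longleftrightarrow> x \<in> A \<and> y \<in> A \<and> le x y \<and> x \<noteq> y \<and>
     \<not> (\<exists>z\<in>A. le x z \<and> le z y \<and> z \<noteq> x \<and> z \<noteq> y)"

definition upper_semimodular :: "'a set \<Rightarrow> ('a \<Rightarrow> 'a \<Rightarrow> bool) \<Rightarrow> bool" where
  "upper_semimodular A le \<longleftrightarrow> lattice_on A le \<and>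
     (\<forall>x\<in>A. \<forall>y\<in>A. covers A le (lmeet A le x y) x \<longrightarrow> covers A le y (ljoin A le x y))"

definition prod_carrier :: "nat set \<Rightarrow> (nat \<Rightarrow> 'a set) \<Rightarrow> (nat \<Rightarrow> 'a) set" where
  "prod_carrier I B = PiE I B"

definition prod_le :: "nat set \<Rightarrow> (nat \<Rightarrow> 'a \<Rightarrow> 'a \<Rightarrow> bool) \<Rightarrow> (nat \<Rightarrow> 'a) \<Rightarrow> (nat \<Rightarrow> 'a) \<Rightarrow> bool" where
  "prod_le I le x y \<longleftrightarrow> (\<forall>j\<in>I. le j (x j) (y j))"

end

theory Submission
  imports Defs
begin

(*
  (i) As e is join-prime, the join in A of two elements outside [e,f] lies outside [e,f] again,
  so L is closed under the joins of A, and it contains the bottom of A because e is nonzero.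
  In a poset of finite length, a join-closed set with a least element is a lattice: the meet of
  x and y is the greatest element of the set of their lower bounds, which is nonempty and
  directed. Greatest elements of directed sets are found by maximising the height function.

  (ii) The product K has finite length (heights add up) and is upper semimodular (a covering
  pair of K changes exactly one coordinate). A join-prime e is supported on a single coordinate,
  since e is the join of e(k := 0) and e(i := 0) for two distinct support coordinates i, k.
  Because f i is the top of K i, a covering pair u < v of L also covers in K: otherwise some
  z with u < z < v lies in [e,f], and then changing u at a coordinate j where v exceeds f
  (so j is not i) to v j gives an element of L strictly between u and v. Now if the meet of x
  and y in L is covered by x in L, the meet of x and y in K is either that element or x, and
  the latter would give x <= y; so upper semimodularity of K yields y covered by the common
  join of x and y.
*)

lemma poset_on_refl: "poset_on A le \<Longrightarrow> x \<in> A \<Longrightarrow> le x x"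
  unfolding poset_on_def by blast

lemma poset_on_antisym: "poset_on A le \<Longrightarrow> x \<in> A \<Longrightarrow> y \<in> A \<Longrightarrow> le x y \<Longrightarrow> le y x \<Longrightarrow> x = y"
  unfolding poset_on_def by blast

lemma poset_on_trans:
  "poset_on A le \<Longrightarrow> x \<in> A \<Longrightarrow> y \<in> A \<Longrightarrow> z \<in> A \<Longrightarrow> le x y \<Longrightarrow> le y z \<Longrightarrow> le x z"
  unfolding poset_on_def by blast

lemma poset_on_subset: "poset_on A le \<Longrightarrow> L \<subseteq> A \<Longrightarrow> poset_on L le"
  unfolding poset_on_def by blast

lemma poset_on_dual: "poset_on A le \<Longrightarrow> poset_on A (\<lambda>x y. le y x)"
  unfolding poset_on_def by blast

lemma lattice_on_poset_on: "lattice_on A le \<Longrightarrow> poset_on A le"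
  unfolding lattice_on_def by blast

lemma finite_length_subset:
  assumes "finite_length A le" "L \<subseteq> A"
  shows "finite_length L le"
proof -
  have "is_chain_in L le C \<Longrightarrow> is_chain_in A le C" for C
    using assms(2) unfolding is_chain_in_def by blast
  then show ?thesis
    using assms(1) unfolding finite_length_def by meson
qed

lemma finite_length_dual:
  assumes "finite_length A le"
  shows "finite_length A (\<lambda>x y. le y x)"
proof -
  have "is_chain_in A (\<lambda>x y. le y x) C = is_chain_in A le C" for C
    unfolding is_chain_in_def by blast
  then show ?thesis
    using assms unfolding finite_length_def by simp
qed

lemma is_lub_unique: "poset_on A le \<Longrightarrow> is_lub A le x y z \<Longrightarrow> is_lub A le x y z' \<Longrightarrow> z = z'"
  unfolding is_lub_def using poset_on_antisym by metis

lemma is_glb_unique: "poset_on A le \<Longrightarrow> is_glb A le x y z \<Longrightarrow> is_glb A le x y z' \<Longrightarrow> z = z'"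
  unfolding is_glb_def using poset_on_antisym by metis

lemma ljoin_eq: "poset_on A le \<Longrightarrow> is_lub A le x y z \<Longrightarrow> ljoin A le x y = z"
  unfolding ljoin_def using is_lub_unique by (metis the_equality)

lemma lmeet_eq: "poset_on A le \<Longrightarrow> is_glb A le x y z \<Longrightarrow> lmeet A le x y = z"
  unfolding lmeet_def using is_glb_unique by (metis the_equality)

lemma is_lub_ljoin: "lattice_on A le \<Longrightarrow> x \<in> A \<Longrightarrow> y \<in> A \<Longrightarrow> is_lub A le x y (ljoin A le x y)"
  unfolding lattice_on_def using ljoin_eq by metis

lemma is_glb_lmeet: "lattice_on A le \<Longrightarrow> x \<in> A \<Longrightarrow> y \<in> A \<Longrightarrow> is_glb A le x y (lmeet A le x y)"
  unfolding lattice_on_def using lmeet_eq by metis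

lemma is_lub_subset: "is_lub A le x y z \<Longrightarrow> L \<subseteq> A \<Longrightarrow> z \<in> L \<Longrightarrow> is_lub L le x y z"
  unfolding is_lub_def by blast

lemma ljoin_absorb:
  assumes "lattice_on A le" "x \<in> A" "y \<in> A" "le x y"
  shows "ljoin A le x y = y"
  using assms by (intro ljoin_eq) (auto simp: is_lub_def intro: lattice_on_poset_on poset_on_refl)

lemma lbot_eq: "poset_on A le \<Longrightarrow> b \<in> A \<Longrightarrow> \<forall>x\<in>A. le b x \<Longrightarrow> lbot A le = b"
  unfolding lbot_def by (rule the_equality) (auto intro: poset_on_antisym)

lemma ltop_eq: "poset_on A le \<Longrightarrow> b \<in> A \<Longrightarrow> \<forall>x\<in>A. le x b \<Longrightarrow> ltop A le = b"
  unfolding ltop_def by (rule the_equality) (auto intro: poset_on_antisym)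

lemma covers_subset: "covers A le x y \<Longrightarrow> L \<subseteq> A \<Longrightarrow> x \<in> L \<Longrightarrow> y \<in> L \<Longrightarrow> covers L le x y"
  unfolding covers_def by blast

(* Bounded and strictly monotone in finite length: maximising it replaces Zorn-type arguments. *)
definition height :: "'a set \<Rightarrow> ('a \<Rightarrow> 'a \<Rightarrow> bool) \<Rightarrow> 'a \<Rightarrow> nat" where
  "height A le x = Max (card ` {C. is_chain_in A le C \<and> (\<forall>c\<in>C. le c x)})"

lemma
  assumes "finite_length A le"
  shows height_attained: "\<exists>C. is_chain_in A le C \<and> (\<forall>c\<in>C. le c x) \<and> card C = height A le x"
    and height_ge_card: "is_chain_in A le C \<Longrightarrow> \<forall>c\<in>C. le c x \<Longrightarrow> card C \<le> height A le x"
    and height_bounded: "\<exists>n. \<forall>y. height A le y \<le> n"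
proof -
  obtain n where n: "\<And>C. is_chain_in A le C \<Longrightarrow> finite C \<and> card C \<le> n"
    using assms unfolding finite_length_def by blast
  have bounded: "card ` {C. is_chain_in A le C \<and> (\<forall>c\<in>C. le c y)} \<subseteq> {..n}" for y
    using n by blast
  then have fin: "finite (card ` {C. is_chain_in A le C \<and> (\<forall>c\<in>C. le c y)})" for y
    using finite_subset by blast
  have "is_chain_in A le {}"
    by (simp add: is_chain_in_def)
  then have ne: "card ` {C. is_chain_in A le C \<and> (\<forall>c\<in>C. le c y)} \<noteq> {}" for y
    by blast
  show "\<exists>C. is_chain_in A le C \<and> (\<forall>c\<in>C. le c x) \<and> card C = height A le x"
    using Max_in[OF fin ne] unfolding height_def by force
  show "is_chain_in A le C \<Longrightarrow> \<forall>c\<in>C. le c x \<Longrightarrow> card C \<le> height A le x"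
    unfolding height_def using fin by (intro Max_ge) auto
  show "\<exists>n. \<forall>y. height A le y \<le> n"
    using Max_in[OF fin ne] bounded unfolding height_def by blast
qed

lemma height_strict_mono:
  assumes po: "poset_on A le" and fl: "finite_length A le"
    and "x \<in> A" "y \<in> A" "le x y" "x \<noteq> y"
  shows "height A le x < height A le y"
proof -
  obtain C where C: "is_chain_in A le C" "\<forall>c\<in>C. le c x" "card C = height A le x"
    using height_attained[OF fl] by blast
  have "finite C"
    using C(1) fl unfolding finite_length_def by blast
  have below_y: "\<forall>c\<in>insert y C. le c y"
  proof
    fix c assume "c \<in> insert y C"
    then show "le c y"
      using C(1,2) assms(3-5) poset_on_trans[OF po, of c x y] poset_on_refl[OF po, of y]
      unfolding is_chain_in_def by blast
  qed
  then have "is_chain_in A le (insert y C)"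
    using C(1) \<open>y \<in> A\<close> by (auto simp: is_chain_in_def)
  moreover have "y \<notin> C"
    using C(2) assms poset_on_antisym[OF po] by blast
  ultimately have "card C + 1 \<le> height A le y"
    using height_ge_card[OF fl _ below_y] \<open>finite C\<close> by simp
  then show ?thesis
    using C(3) by simp
qed

lemma height_mono:
  "poset_on A le \<Longrightarrow> finite_length A le \<Longrightarrow> x \<in> A \<Longrightarrow> y \<in> A \<Longrightarrow> le x y
    \<Longrightarrow> height A le x \<le> height A le y"
  using height_strict_mono by (metis order.order_iff_strict)

lemma finite_length_if_strict_mono:
  fixes h :: "'a \<Rightarrow> nat"
  assumes bounded: "\<forall>x\<in>A. h x \<le> n"
    and strict: "\<And>x y. x \<in> A \<Longrightarrow> y \<in> A \<Longrightarrow> le x y \<Longrightarrow> x \<noteq> y \<Longrightarrow> h x < h y"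
  shows "finite_length A le"
  unfolding finite_length_def
proof (intro exI allI impI)
  fix C assume C: "is_chain_in A le C"
  have "inj_on h C"
  proof (rule inj_onI)
    fix x y assume "x \<in> C" "y \<in> C" "h x = h y"
    then show "x = y"
      using C strict[of x y] strict[of y x] unfolding is_chain_in_def by (metis less_irrefl subsetD)
  qed
  moreover have "h ` C \<subseteq> {..n}"
    using C bounded unfolding is_chain_in_def by blast
  then have "finite (h ` C)" and "card (h ` C) \<le> Suc n"
    using finite_subset card_mono[of "{..n}"] by auto
  ultimately show "finite C \<and> card C \<le> Suc n"
    using finite_imageD card_image by metis
qed

lemma directed_has_greatest:
  assumes po: "poset_on A le" and fl: "finite_length A le"
    and "D \<subseteq> A" "D \<noteq> {}" and directed: "\<forall>u\<in>D. \<forall>v\<in>D. \<exists>w\<in>D. le u w \<and> le v w"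
  shows "\<exists>m\<in>D. \<forall>z\<in>D. le z m"
proof -
  let ?h = "height A le"
  obtain n where "\<forall>y. ?h y \<le> n"
    using height_bounded[OF fl] by blast
  then have "finite (?h ` D)"
    by (metis atMost_iff finite_atMost finite_subset image_subset_iff)
  then obtain m where m: "m \<in> D" "?h m = Max (?h ` D)"
    using Max_in \<open>D \<noteq> {}\<close> by (metis empty_is_image imageE)
  have "le z m" if "z \<in> D" for z
  proof -
    obtain w where w: "w \<in> D" "le m w" "le z w"
      using directed m(1) \<open>z \<in> D\<close> by blast
    have "\<not> ?h m < ?h w"
      using m(2) w(1) \<open>finite (?h ` D)\<close> by (simp add: not_less)
    then have "w = m"
      using height_strict_mono[OF po fl] w m(1) \<open>D \<subseteq> A\<close> by blast
    then show ?thesis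
      using w(3) by simp
  qed
  then show ?thesis
    using m(1) by blast
qed

lemma ltop_greatest:
  assumes lat: "lattice_on A le" and fl: "finite_length A le" and "x \<in> A"
  shows "le x (ltop A le)"
proof -
  have po: "poset_on A le"
    using lat by (rule lattice_on_poset_on)
  have "\<forall>u\<in>A. \<forall>v\<in>A. \<exists>w\<in>A. le u w \<and> le v w"
    using is_lub_ljoin[OF lat] unfolding is_lub_def by blast
  then obtain b where "b \<in> A" "\<forall>x\<in>A. le x b"
    using directed_has_greatest[OF po fl] \<open>x \<in> A\<close> by blast
  then show ?thesis
    using ltop_eq[OF po] \<open>x \<in> A\<close> by auto
qed

lemma
  assumes lat: "lattice_on A le" and fl: "finite_length A le" and "A \<noteq> {}"
  shows lbot_in: "lbot A le \<in> A" and lbot_least: "x \<in> A \<Longrightarrow> le (lbot A le) x"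
proof -
  have po: "poset_on A le"
    using lat by (rule lattice_on_poset_on)
  have "\<forall>u\<in>A. \<forall>v\<in>A. \<exists>w\<in>A. le w u \<and> le w v"
    using is_glb_lmeet[OF lat] unfolding is_glb_def by blast
  then obtain b where "b \<in> A" "\<forall>x\<in>A. le b x"
    using directed_has_greatest[OF poset_on_dual[OF po] finite_length_dual[OF fl]] \<open>A \<noteq> {}\<close>
    by blast
  then show "lbot A le \<in> A" "x \<in> A \<Longrightarrow> le (lbot A le) x"
    using lbot_eq[OF po] by auto
qed

lemma lattice_on_if_ljoins:
  assumes po: "poset_on L le" and fl: "finite_length L le"
    and bot: "b \<in> L" "\<forall>x\<in>L. le b x"
    and lub: "\<forall>x\<in>L. \<forall>y\<in>L. \<exists>z. is_lub L le x y z"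
  shows "lattice_on L le"
  unfolding lattice_on_def
proof (intro conjI ballI po)
  fix x y assume "x \<in> L" "y \<in> L"
  then show "\<exists>z. is_lub L le x y z"
    using lub by blast
  define D where "D = {z \<in> L. le z x \<and> le z y}"
  have "\<exists>w\<in>D. le u w \<and> le v w" if "u \<in> D" "v \<in> D" for u v
  proof -
    have "u \<in> L" "v \<in> L"
      using that by (simp_all add: D_def)
    then obtain w where "is_lub L le u v w"
      using lub by blast
    then show ?thesis
      using that \<open>x \<in> L\<close> \<open>y \<in> L\<close> unfolding D_def is_lub_def by auto
  qed
  then have "\<forall>u\<in>D. \<forall>v\<in>D. \<exists>w\<in>D. le u w \<and> le v w"
    by blast
  moreover have "b \<in> D"
    unfolding D_def using bot \<open>x \<in> L\<close> \<open>y \<in> L\<close> by blast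
  ultimately obtain m where "m \<in> D" "\<forall>z\<in>D. le z m"
    using directed_has_greatest[OF po fl, of D] unfolding D_def by blast
  then have "is_glb L le x y m"
    unfolding is_glb_def D_def by blast
  then show "\<exists>z. is_glb L le x y z" ..
qed

lemma ljoin_in_diff_interval:
  assumes lat: "lattice_on A le" and jp: "join_prime A le e" and "f \<in> A"
    and x: "x \<in> A - interval A le e f" and y: "y \<in> A - interval A le e f"
  shows "ljoin A le x y \<in> A - interval A le e f"
proof
  have po: "poset_on A le"
    using lat by (rule lattice_on_poset_on)
  let ?j = "ljoin A le x y"
  have j: "?j \<in> A" "le x ?j" "le y ?j"
    using is_lub_ljoin[OF lat] x y unfolding is_lub_def by auto
  then show "?j \<in> A" by simp
  show "?j \<notin> interval A le e f"
  proof
    assume "?j \<in> interval A le e f"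
    then have "le e ?j" "le ?j f"
      unfolding interval_def by auto
    moreover have "le e x \<or> le e y"
      using jp \<open>le e ?j\<close> x y unfolding join_prime_def by blast
    ultimately show False
      using x y j poset_on_trans[OF po _ j(1) \<open>f \<in> A\<close>] unfolding interval_def by blast
  qed
qed

lemma lattice_on_diff_interval:
  assumes lat: "lattice_on A le" and fl: "finite_length A le" and jp: "join_prime A le e"
    and nonbot: "e \<noteq> lbot A le" and "f \<in> A"
  shows "lattice_on (A - interval A le e f) le"
proof (rule lattice_on_if_ljoins)
  let ?L = "A - interval A le e f"
  have po: "poset_on A le"
    using lat by (rule lattice_on_poset_on)
  show "poset_on ?L le"
    using poset_on_subset[OF po] by blast
  show "finite_length ?L le"
    using finite_length_subset[OF fl] by blast
  have "e \<in> A"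
    using jp unfolding join_prime_def by blast
  then have bot: "lbot A le \<in> A" "\<forall>x\<in>A. le (lbot A le) x"
    using lbot_in[OF lat fl] lbot_least[OF lat fl] by blast+
  moreover have "\<not> le e (lbot A le)"
    using nonbot bot poset_on_antisym[OF po] \<open>e \<in> A\<close> by blast
  ultimately show "lbot A le \<in> ?L" "\<forall>x\<in>?L. le (lbot A le) x"
    unfolding interval_def by auto
  show "\<forall>x\<in>?L. \<forall>y\<in>?L. \<exists>z. is_lub ?L le x y z"
    using is_lub_subset[OF is_lub_ljoin[OF lat]] ljoin_in_diff_interval[OF lat jp \<open>f \<in> A\<close>]
    by blast
qed

lemma PiE_fun_upd_mem: "u \<in> PiE I B \<Longrightarrow> j \<in> I \<Longrightarrow> a \<in> B j \<Longrightarrow> u(j := a) \<in> PiE I B"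
  by (metis PiE_fun_upd insert_absorb)

lemma poset_on_prod:
  assumes po: "\<forall>j\<in>I. poset_on (B j) (le j)"
  shows "poset_on (PiE I B) (prod_le I le)"
  unfolding poset_on_def prod_le_def
proof (intro conjI ballI impI)
  fix x j assume "x \<in> PiE I B" "j \<in> I"
  then show "le j (x j) (x j)"
    using po poset_on_refl PiE_mem by metis
next
  fix x y assume x: "x \<in> PiE I B" and y: "y \<in> PiE I B"
    and "(\<forall>j\<in>I. le j (x j) (y j)) \<and> (\<forall>j\<in>I. le j (y j) (x j))"
  then show "x = y"
    using po poset_on_antisym PiE_mem by (metis PiE_ext)
next
  fix x y z j assume "x \<in> PiE I B" "y \<in> PiE I B" "z \<in> PiE I B"
    and "(\<forall>j\<in>I. le j (x j) (y j)) \<and> (\<forall>j\<in>I. le j (y j) (z j))" and j: "j \<in> I"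
  then show "le j (x j) (z j)"
    using poset_on_trans[of "B j" "le j" "x j" "y j" "z j"] po j PiE_mem by blast
qed

lemma is_lub_prod:
  assumes "\<forall>j\<in>I. is_lub (B j) (le j) (x j) (y j) (z j)" and "z \<in> extensional I"
  shows "is_lub (PiE I B) (prod_le I le) x y z"
  using assms by (auto simp: is_lub_def prod_le_def PiE_iff)

lemma is_glb_prod:
  assumes "\<forall>j\<in>I. is_glb (B j) (le j) (x j) (y j) (z j)" and "z \<in> extensional I"
  shows "is_glb (PiE I B) (prod_le I le) x y z"
  using assms by (auto simp: is_glb_def prod_le_def PiE_iff)

lemma
  assumes lat: "\<forall>j\<in>I. lattice_on (B j) (le j)" and "x \<in> PiE I B" "y \<in> PiE I B"
  shows ljoin_prod: "ljoin (PiE I B) (prod_le I le) x y = (\<lambda>j\<in>I. ljoin (B j) (le j) (x j) (y j))"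
    and lmeet_prod: "lmeet (PiE I B) (prod_le I le) x y = (\<lambda>j\<in>I. lmeet (B j) (le j) (x j) (y j))"
    and is_lub_ljoin_prod:
      "is_lub (PiE I B) (prod_le I le) x y (\<lambda>j\<in>I. ljoin (B j) (le j) (x j) (y j))"
    and is_glb_lmeet_prod:
      "is_glb (PiE I B) (prod_le I le) x y (\<lambda>j\<in>I. lmeet (B j) (le j) (x j) (y j))"
proof -
  have po: "poset_on (PiE I B) (prod_le I le)"
    using lat by (intro poset_on_prod) (auto intro: lattice_on_poset_on)
  show lub: "is_lub (PiE I B) (prod_le I le) x y (\<lambda>j\<in>I. ljoin (B j) (le j) (x j) (y j))"
    using assms by (intro is_lub_prod) (auto intro: is_lub_ljoin PiE_mem)
  show glb: "is_glb (PiE I B) (prod_le I le) x y (\<lambda>j\<in>I. lmeet (B j) (le j) (x j) (y j))"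
    using assms by (intro is_glb_prod) (auto intro: is_glb_lmeet PiE_mem)
  show "ljoin (PiE I B) (prod_le I le) x y = (\<lambda>j\<in>I. ljoin (B j) (le j) (x j) (y j))"
    using ljoin_eq[OF po lub] .
  show "lmeet (PiE I B) (prod_le I le) x y = (\<lambda>j\<in>I. lmeet (B j) (le j) (x j) (y j))"
    using lmeet_eq[OF po glb] .
qed

lemma lattice_on_prod:
  assumes lat: "\<forall>j\<in>I. lattice_on (B j) (le j)"
  shows "lattice_on (PiE I B) (prod_le I le)"
proof -
  have "poset_on (PiE I B) (prod_le I le)"
    using lat by (intro poset_on_prod) (auto intro: lattice_on_poset_on)
  then show ?thesis
    unfolding lattice_on_def using is_lub_ljoin_prod[OF lat] is_glb_lmeet_prod[OF lat] by blast
qed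

lemma finite_length_prod:
  assumes "finite I" and po: "\<forall>j\<in>I. poset_on (B j) (le j)"
    and fl: "\<forall>j\<in>I. finite_length (B j) (le j)"
  shows "finite_length (PiE I B) (prod_le I le)"
proof -
  let ?h = "\<lambda>x. \<Sum>j\<in>I. height (B j) (le j) (x j)"
  obtain n where n: "\<forall>j\<in>I. \<forall>y. height (B j) (le j) y \<le> n j"
    using bchoice[of I "\<lambda>j n. \<forall>y. height (B j) (le j) y \<le> n"] height_bounded fl by blast
  show ?thesis
  proof (rule finite_length_if_strict_mono)
    show "\<forall>x\<in>PiE I B. ?h x \<le> (\<Sum>j\<in>I. n j)"
      using n by (simp add: sum_mono)
    fix x y assume x: "x \<in> PiE I B" and y: "y \<in> PiE I B"
      and "prod_le I le x y" "x \<noteq> y"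
    then have le: "\<forall>j\<in>I. le j (x j) (y j)" and "\<exists>j\<in>I. x j \<noteq> y j"
      unfolding prod_le_def using PiE_ext[OF x y] by auto
    then obtain i where "i \<in> I" "x i \<noteq> y i"
      by blast
    then have "height (B i) (le i) (x i) < height (B i) (le i) (y i)"
      using height_strict_mono[of "B i" "le i" "x i" "y i"] po fl le PiE_mem[OF x] PiE_mem[OF y]
      by blast
    then show "?h x < ?h y"
      using \<open>finite I\<close> \<open>i \<in> I\<close> po fl le PiE_mem[OF x] PiE_mem[OF y]
      by (intro sum_strict_mono_ex1) (auto intro!: height_mono)
  qed
qed

lemma prod_le_fun_upd_between:
  assumes po: "\<forall>j\<in>I. poset_on (B j) (le j)" and u: "u \<in> PiE I B"
    and uv: "prod_le I le u v" and "le j (u j) a" "le j a (v j)"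
  shows "prod_le I le u (u(j := a))" "prod_le I le (u(j := a)) v"
  using assms poset_on_refl PiE_mem unfolding prod_le_def by (metis fun_upd_apply)+

lemma covers_prodE:
  assumes po: "\<forall>j\<in>I. poset_on (B j) (le j)" and c: "covers (PiE I B) (prod_le I le) u v"
  obtains j where "j \<in> I" "covers (B j) (le j) (u j) (v j)" "\<forall>k\<in>I. k \<noteq> j \<longrightarrow> u k = v k"
proof -
  have u: "u \<in> PiE I B" and v: "v \<in> PiE I B" and uv: "prod_le I le u v"
    and between: "\<And>z. z \<in> PiE I B \<Longrightarrow> prod_le I le u z \<Longrightarrow> prod_le I le z v \<Longrightarrow> z = u \<or> z = v"
    using c unfolding covers_def by auto
  obtain j where j: "j \<in> I" "u j \<noteq> v j"
    using PiE_ext[OF u v] c unfolding covers_def by blast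
  have uvj: "le j (u j) (v j)"
    using uv j(1) unfolding prod_le_def by blast
  have upd: "u(j := a) \<in> PiE I B" "prod_le I le u (u(j := a))" "prod_le I le (u(j := a)) v"
    if "a \<in> B j" "le j (u j) a" "le j a (v j)" for a
    using PiE_fun_upd_mem[OF u j(1)] prod_le_fun_upd_between[OF po u uv] that by auto
  have "u(j := v j) = v"
    using between[OF upd[of "v j"]] j(2) PiE_mem[OF v j(1)] uvj poset_on_refl po j(1)
    by (metis fun_upd_same)
  then have "\<forall>k\<in>I. k \<noteq> j \<longrightarrow> u k = v k"
    by (metis fun_upd_other)
  moreover have "covers (B j) (le j) (u j) (v j)"
    unfolding covers_def
  proof (intro conjI)
    show "u j \<in> B j" "v j \<in> B j" "le j (u j) (v j)" "u j \<noteq> v j"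
      using PiE_mem[OF u j(1)] PiE_mem[OF v j(1)] uvj j(2) by auto
    show "\<not> (\<exists>a\<in>B j. le j (u j) a \<and> le j a (v j) \<and> a \<noteq> u j \<and> a \<noteq> v j)"
      using between[OF upd] by (metis fun_upd_same)
  qed
  ultimately show thesis
    using that j(1) by blast
qed

lemma covers_prodI:
  assumes po: "\<forall>j\<in>I. poset_on (B j) (le j)" and u: "u \<in> PiE I B" and v: "v \<in> PiE I B"
    and j: "j \<in> I" and cj: "covers (B j) (le j) (u j) (v j)"
    and same: "\<forall>k\<in>I. k \<noteq> j \<longrightarrow> u k = v k"
  shows "covers (PiE I B) (prod_le I le) u v"
  unfolding covers_def
proof (intro conjI)
  show "u \<in> PiE I B" "v \<in> PiE I B"
    by (fact u, fact v)
  show "prod_le I le u v"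
    using cj same po poset_on_refl PiE_mem[OF u] unfolding prod_le_def covers_def by metis
  show "u \<noteq> v"
    using cj unfolding covers_def by metis
  show "\<not> (\<exists>z\<in>PiE I B. prod_le I le u z \<and> prod_le I le z v \<and> z \<noteq> u \<and> z \<noteq> v)"
  proof
    assume "\<exists>z\<in>PiE I B. prod_le I le u z \<and> prod_le I le z v \<and> z \<noteq> u \<and> z \<noteq> v"
    then obtain z where z: "z \<in> PiE I B" "prod_le I le u z" "prod_le I le z v" "z \<noteq> u" "z \<noteq> v"
      by blast
    have "z k = u k" if "k \<in> I" "k \<noteq> j" for k
    proof -
      have "le k (u k) (z k)" "le k (z k) (u k)"
        using z(2,3) same that unfolding prod_le_def by metis+
      then show ?thesis
        using poset_on_antisym po that PiE_mem[OF u] PiE_mem[OF z(1)] by metis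
    qed
    moreover have "z j = u j \<or> z j = v j"
      using z(2,3) cj PiE_mem[OF z(1) j] j unfolding covers_def prod_le_def by blast
    ultimately show False
      using z(1,4,5) same PiE_ext[OF z(1) u] PiE_ext[OF z(1) v] by metis
  qed
qed

lemma upper_semimodular_prod:
  assumes usm: "\<forall>j\<in>I. upper_semimodular (B j) (le j)"
  shows "upper_semimodular (PiE I B) (prod_le I le)"
  unfolding upper_semimodular_def
proof (intro conjI ballI impI)
  have lat: "\<forall>j\<in>I. lattice_on (B j) (le j)"
    using usm unfolding upper_semimodular_def by blast
  then have po: "\<forall>j\<in>I. poset_on (B j) (le j)"
    using lattice_on_poset_on by blast
  show "lattice_on (PiE I B) (prod_le I le)"
    using lattice_on_prod[OF lat] .
  fix x y assume x: "x \<in> PiE I B" and y: "y \<in> PiE I B"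
    and "covers (PiE I B) (prod_le I le) (lmeet (PiE I B) (prod_le I le) x y) x"
  then obtain j where j: "j \<in> I"
    and cj: "covers (B j) (le j) ((\<lambda>j\<in>I. lmeet (B j) (le j) (x j) (y j)) j) (x j)"
    and same: "\<forall>k\<in>I. k \<noteq> j \<longrightarrow> (\<lambda>j\<in>I. lmeet (B j) (le j) (x j) (y j)) k = x k"
    using covers_prodE[OF po] unfolding lmeet_prod[OF lat x y] by blast
  then have cj: "covers (B j) (le j) (lmeet (B j) (le j) (x j) (y j)) (x j)"
    and same: "\<forall>k\<in>I. k \<noteq> j \<longrightarrow> lmeet (B k) (le k) (x k) (y k) = x k"
    by simp_all
  have xj: "x j \<in> B j" and yj: "y j \<in> B j"
    using PiE_mem x y j by auto
  have "covers (B j) (le j) (y j) (ljoin (B j) (le j) (x j) (y j))"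
    using usm j xj yj cj unfolding upper_semimodular_def by blast
  moreover have "ljoin (B k) (le k) (x k) (y k) = y k" if "k \<in> I" "k \<noteq> j" for k
  proof -
    have "le k (x k) (y k)"
      using same that is_glb_lmeet[of "B k" "le k" "x k" "y k"] lat PiE_mem x y
      unfolding is_glb_def by metis
    then show ?thesis
      using ljoin_absorb lat that PiE_mem x y by metis
  qed
  moreover have "ljoin (PiE I B) (prod_le I le) x y \<in> PiE I B"
    using is_lub_ljoin[OF lattice_on_prod[OF lat] x y] unfolding is_lub_def by blast
  ultimately show "covers (PiE I B) (prod_le I le) y (ljoin (PiE I B) (prod_le I le) x y)"
    using covers_prodI[OF po y _ j] j unfolding ljoin_prod[OF lat x y] by simp
qed

lemma lbot_prod:
  assumes lat: "\<forall>j\<in>I. lattice_on (B j) (le j)" and fl: "\<forall>j\<in>I. finite_length (B j) (le j)"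
    and ne: "\<forall>j\<in>I. B j \<noteq> {}"
  shows "lbot (PiE I B) (prod_le I le) = (\<lambda>j\<in>I. lbot (B j) (le j))"
proof (rule lbot_eq)
  show "poset_on (PiE I B) (prod_le I le)"
    using lat by (intro poset_on_prod) (auto intro: lattice_on_poset_on)
  show "(\<lambda>j\<in>I. lbot (B j) (le j)) \<in> PiE I B"
    using lat fl ne by (auto simp: PiE_iff intro: lbot_in)
  show "\<forall>x\<in>PiE I B. prod_le I le (\<lambda>j\<in>I. lbot (B j) (le j)) x"
    using lat fl ne lbot_least PiE_mem unfolding prod_le_def by (metis restrict_apply')
qed

lemma join_prime_prod_unique_support:
  assumes lat: "\<forall>j\<in>I. lattice_on (B j) (le j)" and fl: "\<forall>j\<in>I. finite_length (B j) (le j)"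
    and e: "e \<in> PiE I B" and jp: "join_prime (PiE I B) (prod_le I le) e"
    and nonbot: "e \<noteq> lbot (PiE I B) (prod_le I le)"
  shows "\<exists>!i. i \<in> I \<and> e i \<noteq> lbot (B i) (le i)"
proof -
  let ?bot = "\<lambda>j. lbot (B j) (le j)"
  have ne: "\<forall>j\<in>I. B j \<noteq> {}"
    using e PiE_mem by blast
  have po: "\<forall>j\<in>I. poset_on (B j) (le j)"
    using lat lattice_on_poset_on by blast
  have bot: "?bot j \<in> B j" "\<forall>x\<in>B j. le j (?bot j) x" if "j \<in> I" for j
    using lbot_in[of "B j" "le j"] lbot_least[of "B j" "le j"] lat fl ne that by blast+
  have "\<exists>i\<in>I. e i \<noteq> ?bot i"
  proof (rule ccontr)
    assume "\<not> ?thesis"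
    then have "e = (\<lambda>j\<in>I. ?bot j)"
      using e by (auto simp: PiE_iff extensional_def)
    then show False
      using nonbot lbot_prod[OF lat fl ne] by simp
  qed
  moreover have "i = k" if i: "i \<in> I" "e i \<noteq> ?bot i" and k: "k \<in> I" "e k \<noteq> ?bot k" for i k
  proof (rule ccontr)
    assume "i \<noteq> k"
    define u where "u = e(k := ?bot k)"
    define v where "v = e(i := ?bot i)"
    have uv: "u \<in> PiE I B" "v \<in> PiE I B"
      unfolding u_def v_def using PiE_fun_upd_mem e bot i k by auto
    have "u j = e j \<or> v j = e j" for j
      unfolding u_def v_def using \<open>i \<noteq> k\<close> by simp
    moreover have "le j (u j) (e j)" "le j (v j) (e j)" if "j \<in> I" for j
      unfolding u_def v_def using that bot PiE_mem[OF e] po poset_on_refl[of "B j" "le j" "e j"]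
      by auto
    ultimately have "is_lub (PiE I B) (prod_le I le) u v e"
      using e by (intro is_lub_prod) (auto simp: is_lub_def PiE_iff, metis)
    then have "ljoin (PiE I B) (prod_le I le) u v = e"
      by (rule ljoin_eq[OF poset_on_prod[OF po]])
    then have "prod_le I le e u \<or> prod_le I le e v"
      using jp uv poset_on_refl[OF poset_on_prod[OF po] e] unfolding join_prime_def by metis
    then show False
      using i k bot poset_on_antisym po PiE_mem[OF e] unfolding prod_le_def u_def v_def
      by (metis fun_upd_same)
  qed
  ultimately show ?thesis
    by blast
qed

lemma upper_semimodular_subset:
  assumes usm: "upper_semimodular K le" and "L \<subseteq> K" and latL: "lattice_on L le"
    and joins: "\<forall>x\<in>L. \<forall>y\<in>L. ljoin K le x y \<in> L"
    and covers_in_K: "\<And>u v. covers L le u v \<Longrightarrow> covers K le u v"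
  shows "upper_semimodular L le"
  unfolding upper_semimodular_def
proof (intro conjI ballI impI latL)
  fix x y assume x: "x \<in> L" and y: "y \<in> L" and c: "covers L le (lmeet L le x y) x"
  have latK: "lattice_on K le"
    using usm unfolding upper_semimodular_def by blast
  have poK: "poset_on K le" and poL: "poset_on L le"
    using latK latL by (auto intro: lattice_on_poset_on)
  have xK: "x \<in> K" and yK: "y \<in> K"
    using x y \<open>L \<subseteq> K\<close> by auto
  let ?mL = "lmeet L le x y" and ?mK = "lmeet K le x y"
  have glbL: "is_glb L le x y ?mL" and glbK: "is_glb K le x y ?mK"
    using is_glb_lmeet[OF latL x y] is_glb_lmeet[OF latK xK yK] by blast+
  have cK: "covers K le ?mL x"
    using covers_in_K[OF c] .
  have "le ?mL ?mK" "?mK \<in> K" "le ?mK x"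
    using glbL glbK \<open>L \<subseteq> K\<close> unfolding is_glb_def by auto
  then have "?mK = ?mL \<or> ?mK = x"
    using cK unfolding covers_def by blast
  moreover have "?mK \<noteq> x"
  proof
    assume "?mK = x"
    then have "is_glb L le x y x"
      using glbK x poset_on_refl[OF poL x] unfolding is_glb_def by auto
    then have "?mL = x"
      using lmeet_eq[OF poL] by blast
    then show False
      using c unfolding covers_def by blast
  qed
  ultimately have "covers K le ?mK x"
    using cK by simp
  then have "covers K le y (ljoin K le x y)"
    using usm xK yK unfolding upper_semimodular_def by blast
  moreover have "ljoin L le x y = ljoin K le x y"
    using ljoin_eq[OF poL] is_lub_subset[OF is_lub_ljoin[OF latK xK yK] \<open>L \<subseteq> K\<close>] joins x y
    by blast
  ultimately show "covers L le y (ljoin L le x y)"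
    using covers_subset[OF _ \<open>L \<subseteq> K\<close> y] joins x y by simp
qed

lemma covers_prod_diff_interval:
  assumes po: "\<forall>j\<in>I. poset_on (B j) (le j)"
    and e: "e \<in> PiE I B" and i: "i \<in> I" and e_least: "\<forall>j\<in>I - {i}. \<forall>x\<in>B j. le j (e j) x"
    and f: "f \<in> PiE I B" and f_greatest: "\<forall>x\<in>B i. le i x (f i)"
    and c: "covers (PiE I B - interval (PiE I B) (prod_le I le) e f) (prod_le I le) u v"
  shows "covers (PiE I B) (prod_le I le) u v"
proof -
  let ?K = "PiE I B" and ?le = "prod_le I le"
  let ?L = "?K - interval ?K ?le e f"
  have poK: "poset_on ?K ?le"
    using poset_on_prod[OF po] .
  have uL: "u \<in> ?L" and vL: "v \<in> ?L" and uv: "?le u v" and "u \<noteq> v"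
    and between: "\<And>z. z \<in> ?L \<Longrightarrow> ?le u z \<Longrightarrow> ?le z v \<Longrightarrow> z = u \<or> z = v"
    using c unfolding covers_def by auto
  have u: "u \<in> ?K" and v: "v \<in> ?K"
    using uL vL by auto
  have "\<not> (\<exists>z\<in>?K. ?le u z \<and> ?le z v \<and> z \<noteq> u \<and> z \<noteq> v)"
  proof
    assume "\<exists>z\<in>?K. ?le u z \<and> ?le z v \<and> z \<noteq> u \<and> z \<noteq> v"
    then obtain z where z: "z \<in> ?K" "?le u z" "?le z v" "z \<noteq> u" "z \<noteq> v"
      by blast
    then have ez: "?le e z" and zf: "?le z f"
      using between unfolding interval_def by auto
    have uf: "?le u f"
      using poset_on_trans[OF poK u z(1) f] z(2) zf by blast
    have "\<not> le i (e i) (u i)"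
    proof
      assume "le i (e i) (u i)"
      then have "?le e u"
        using e_least PiE_mem[OF u] unfolding prod_le_def by auto
      then show False
        using uL uf unfolding interval_def by blast
    qed
    moreover have ev: "?le e v"
      using poset_on_trans[OF poK e z(1) v] ez z(3) by blast
    then obtain j where j: "j \<in> I" "\<not> le j (v j) (f j)"
      using vL unfolding interval_def prod_le_def by auto
    have "j \<noteq> i"
      using j f_greatest PiE_mem[OF v] by blast
    let ?w = "u(j := v j)"
    have "le j (u j) (v j)" "le j (v j) (v j)"
      using uv j(1) poset_on_refl[of "B j" "le j" "v j"] po PiE_mem[OF v j(1)]
      unfolding prod_le_def by auto
    then have "?w \<in> ?K" "?le u ?w" "?le ?w v"
      using PiE_fun_upd_mem[OF u j(1) PiE_mem[OF v j(1)]] prod_le_fun_upd_between[OF po u uv]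
      by auto
    moreover have "?w \<notin> interval ?K ?le e f"
      using j unfolding interval_def prod_le_def by auto
    ultimately have "?w = u \<or> ?w = v"
      using between by blast
    moreover have "le j (u j) (f j)" "le i (e i) (v i)"
      using uf ev j(1) i unfolding prod_le_def by auto
    ultimately show False
      using j(2) \<open>j \<noteq> i\<close> \<open>\<not> le i (e i) (u i)\<close> by (metis fun_upd_other fun_upd_same)
  qed
  then show ?thesis
    unfolding covers_def using u v uv \<open>u \<noteq> v\<close> by blast
qed

lemma upper_semimodular_prod_diff_interval:
  assumes "finite I" and usm: "\<forall>j\<in>I. upper_semimodular (B j) (le j)"
    and fl: "\<forall>j\<in>I. finite_length (B j) (le j)"
    and e: "e \<in> PiE I B" and jp: "join_prime (PiE I B) (prod_le I le) e"
    and nonbot: "e \<noteq> lbot (PiE I B) (prod_le I le)"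
    and i: "i \<in> I" "e i \<noteq> lbot (B i) (le i)"
    and f: "f \<in> PiE I B" "f i = ltop (B i) (le i)"
  shows "upper_semimodular (PiE I B - interval (PiE I B) (prod_le I le) e f) (prod_le I le)"
proof (rule upper_semimodular_subset)
  have lat: "\<forall>j\<in>I. lattice_on (B j) (le j)"
    using usm unfolding upper_semimodular_def by blast
  then have po: "\<forall>j\<in>I. poset_on (B j) (le j)"
    using lattice_on_poset_on by blast
  have ne: "\<forall>j\<in>I. B j \<noteq> {}"
    using e PiE_mem by blast
  show "upper_semimodular (PiE I B) (prod_le I le)"
    using upper_semimodular_prod[OF usm] .
  show "lattice_on (PiE I B - interval (PiE I B) (prod_le I le) e f) (prod_le I le)"
    using lattice_on_diff_interval[OF lattice_on_prod[OF lat]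
        finite_length_prod[OF \<open>finite I\<close> po fl] jp nonbot f(1)] .
  show "\<forall>x\<in>PiE I B - interval (PiE I B) (prod_le I le) e f. \<forall>y\<in>PiE I B - interval (PiE I B) (prod_le I le) e f.
      ljoin (PiE I B) (prod_le I le) x y \<in> PiE I B - interval (PiE I B) (prod_le I le) e f"
    using ljoin_in_diff_interval[OF lattice_on_prod[OF lat] jp f(1)] by blast
  have "e j = lbot (B j) (le j)" if "j \<in> I - {i}" for j
    using join_prime_prod_unique_support[OF lat fl e jp nonbot] i that by blast
  then have "\<forall>j\<in>I - {i}. \<forall>x\<in>B j. le j (e j) x"
    using lbot_least lat fl ne by fastforce
  moreover have "\<forall>x\<in>B i. le i x (f i)"
    using ltop_greatest lat fl ne i(1) f(2) by metis
  ultimately show "covers (PiE I B) (prod_le I le) u v"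
    if "covers (PiE I B - interval (PiE I B) (prod_le I le) e f) (prod_le I le) u v" for u v
    using covers_prod_diff_interval[OF po e i(1) _ f(1) _ that] by blast
  show "PiE I B - interval (PiE I B) (prod_le I le) e f \<subseteq> PiE I B"
    by blast
qed

theorem proposition2p1:
  shows
  "(\<forall>(A :: 'a set) le e f.
      lattice_on A le \<and> finite_length A le \<and>
      join_prime A le e \<and> e \<noteq> lbot A le \<and> f \<in> A \<and> le e f
      \<longrightarrow> lattice_on (A - interval A le e f) le)
   \<and>
   (\<forall>(t::nat) (B :: nat \<Rightarrow> 'b set) (leB :: nat \<Rightarrow> 'b \<Rightarrow> 'b \<Rightarrow> bool) e.
      let I = {1..t}; K = prod_carrier I B; leK = prod_le I leB in
      0 < t \<and>
      (\<forall>j\<in>I. upper_semimodular (B j) (leB j) \<and> finite_length (B j) (leB j)) \<and>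
      e \<in> K \<and> join_prime K leK e \<and> e \<noteq> lbot K leK
      \<longrightarrow>
        (\<exists>!i. i \<in> I \<and> e i \<noteq> lbot (B i) (leB i)) \<and>
        (\<forall>i f. i \<in> I \<and> e i \<noteq> lbot (B i) (leB i) \<and> f \<in> K \<and> f i = ltop (B i) (leB i)
           \<longrightarrow> (let L = K - interval K leK e f in
                 upper_semimodular L leK \<and>
                 (\<forall>x\<in>L. \<forall>y\<in>L. ljoin K leK x y \<in> L))))"
  unfolding Let_def prod_carrier_def
  apply (intro conjI allI impI; elim conjE)
  subgoal for A le e f
    by (rule lattice_on_diff_interval)
  subgoal for t B leB e
    by (rule join_prime_prod_unique_support) (auto simp: upper_semimodular_def)
  subgoal for t B leB e i f
    by (rule upper_semimodular_prod_diff_interval) auto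
  subgoal for t B leB e i f
    by (intro ballI ljoin_in_diff_interval lattice_on_prod) (auto simp: upper_semimodular_def)
  done

end
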